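(* Let $\tau:\mathscr{A}\to\mathbb{C}$ be a linear functional with $|\tau(q)|\le C_0^{\deg q}$ for every monomial $q$, and let $A>1$ with $C_0/A<1/2$. For $g\in\mathscr{A}_0$ put $Q_m(\Sigma g)=Q_m(\Sigma g,\dots,\Sigma g)$. Then for all $f,g\in\mathscr{A}_0$, $$\|Q_m(\Sigma g)-Q_m(\Sigma f)\|_A\le2(2A^{-2})^m\sum_{k=0}^{m-1}\|g\|_A^k\|f\|_A^{m-k-1}\|f-g\|_A.$$ In particular $\|Q_m(\Sigma g)\|_A\le2(2A^{-2})^m\|g\|_A^m$.
   Context: $\mathscr{A}=\mathbb{C}\langle X_1,\dots,X_n\rangle$, $\mathscr{A}_0$ the span of monomials of degree $\ge1$; $\|P\|_A=\sum_q|\lambda_q(P)|A^{\deg q}$ for $P=\sum_q\lambda_q(P)q$. $\Sigma q=q/\deg q$ on monomials of degree $\ge1$. $\partial_j$: derivation with $\partial_jX_i=\delta_{ij}1\otimes1$; $\mathscr{D}_jq=\sum_{q=BX_jC}CB$; $\mathscr{J}\mathscr{D}g=(\partial_j\mathscr{D}_ig)_{i,j}$, with products in $M_n(\mathscr{A}\otimes\mathscr{A}^{op})$ using $(a\otimes b)(c\otimes d)=ac\otimes db$. $Q_m(g_1,\dots,g_m)=(1\otimes\tau+\tau\otimes1)\{\sum_i[(\mathscr{J}\mathscr{D}g_1)\cdots(\mathscr{J}\mathscr{D}g_m)]_{ii}\}$, where $(1\otimes\tau+\tau\otimes1)(a\otimes b)=a\tau(b)+\tau(a)b$. *)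

theory Defs
  imports Complex_Main
begin

text \<open>Noncommutative polynomials in X_0,...,X_{n-1}: a monomial is a word (nat list),
a polynomial is its coefficient function (finitely supported). Elements of the
algebraic tensor product A \<otimes> A are coefficient functions on pairs of words.\<close>

type_synonym ncpoly = "nat list \<Rightarrow> complex"
type_synonym ncpoly2 = "nat list \<times> nat list \<Rightarrow> complex"

definition supp :: "('a \<Rightarrow> complex) \<Rightarrow> 'a set" where
  "supp P = {q. P q \<noteq> 0}"

definition is_ncpoly :: "nat \<Rightarrow> ncpoly \<Rightarrow> bool" where
  "is_ncpoly n P \<longleftrightarrow> finite (supp P) \<and> (\<forall>q\<in>supp P. set q \<subseteq> {..<n})"

definition is_ncpoly0 :: "nat \<Rightarrow> ncpoly \<Rightarrow> bool" where
  "is_ncpoly0 n P \<longleftrightarrow> is_ncpoly n P \<and> P [] = 0"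

definition normA :: "real \<Rightarrow> ncpoly \<Rightarrow> real" where
  "normA A P = (\<Sum>q\<in>supp P. cmod (P q) * A ^ length q)"

definition Sigma_op :: "ncpoly \<Rightarrow> ncpoly" where
  "Sigma_op P q = (if q = [] then 0 else P q / of_nat (length q))"

text \<open>Cyclic derivative: D_j q = sum over q = B X_j C of C B.\<close>
definition cycD :: "nat \<Rightarrow> ncpoly \<Rightarrow> ncpoly" where
  "cycD j P w = (\<Sum>i\<le>length w. P (drop i w @ j # take i w))"

text \<open>Free difference quotient: d_j q = sum over q = B X_j C of B \<otimes> C.\<close>
definition ddiff :: "nat \<Rightarrow> ncpoly \<Rightarrow> ncpoly2" where
  "ddiff j P = (\<lambda>(u, v). P (u @ j # v))"

text \<open>Product in A \<otimes> A^op: (a \<otimes> b)(c \<otimes> d) = ac \<otimes> db.\<close>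
definition tmult :: "ncpoly2 \<Rightarrow> ncpoly2 \<Rightarrow> ncpoly2" where
  "tmult X Y = (\<lambda>(w1, w2). \<Sum>i\<le>length w1. \<Sum>j\<le>length w2.
      X (take i w1, drop j w2) * Y (drop i w1, take j w2))"

definition tone :: ncpoly2 where
  "tone = (\<lambda>(u, v). if u = [] \<and> v = [] then 1 else 0)"

text \<open>n x n matrices over A \<otimes> A^op (entries with indices < n are relevant).\<close>
type_synonym tmat = "nat \<Rightarrow> nat \<Rightarrow> ncpoly2"

definition mat_mult :: "nat \<Rightarrow> tmat \<Rightarrow> tmat \<Rightarrow> tmat" where
  "mat_mult n M N = (\<lambda>i k. \<lambda>x. \<Sum>j<n. tmult (M i j) (N j k) x)"

definition mat_one :: tmat where
  "mat_one = (\<lambda>i k. if i = k then tone else (\<lambda>_. 0))"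

definition JD :: "nat \<Rightarrow> ncpoly \<Rightarrow> tmat" where
  "JD n g = (\<lambda>i j. ddiff j (cycD i g))"

text \<open>tau given by its values on monomials, extended linearly.\<close>
definition one_tau_tau_one :: "(nat list \<Rightarrow> complex) \<Rightarrow> ncpoly2 \<Rightarrow> ncpoly" where
  "one_tau_tau_one tau T w =
     (\<Sum>v\<in>{v. T (w, v) \<noteq> 0}. T (w, v) * tau v) +
     (\<Sum>u\<in>{u. T (u, w) \<noteq> 0}. tau u * T (u, w))"

definition Qm :: "nat \<Rightarrow> (nat list \<Rightarrow> complex) \<Rightarrow> ncpoly list \<Rightarrow> ncpoly" where
  "Qm n tau gs = one_tau_tau_one tau
     (\<lambda>x. \<Sum>i<n. foldr (mat_mult n) (map (JD n) gs) mat_one i i x)"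

end

theory Submission
  imports Defs "HOL-Analysis.Binary_Product_Measure"
begin

(* Everything is reduced to weighted l1-norms, which are sub-additive and
   sub-multiplicative, so the estimate becomes bookkeeping of weights.
   1. On A (x) A^op we use the norm  |T|_{a,c} = sum_{u,v} |T(u,v)| a^|u| c^|v|, taken as an
      extended nonnegative sum over all pairs of words (so no finiteness is needed).  It is
      sub-multiplicative for (a (x) b)(c (x) d) = ac (x) db, since this product concatenates
      the outer and the inner tensor legs.
   2. For n x n matrices over A (x) A^op the sum of the entry norms is sub-multiplicative, giving
      |M^m| <= |M|^m and the telescoping bound |G^m - F^m| <= sum_k |G|^k |F|^(m-k-1) |G - F|.
   3. Key estimate: |JD(Sigma g)|_{a,c} <= (2/A^2) |g|_A for (a,c) = (A,C0) and (C0,A).  A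
      monomial q contributes at most |q| * sum_t a^t c^(|q|-2-t) (one term per rotation and
      splitting position), the factor |q| is cancelled by Sigma, and the geometric sum is at
      most 2 A^(|q|-2) because 2 C0 <= A.
   4. |(1 (x) tau + tau (x) 1) T|_A <= |T|_{A,C0} + |T|_{C0,A} by |tau(q)| <= C0^|q|; this is
      where the leading factor 2 comes from.
   Bounded supports are tracked only to make the finite sums defining 1 (x) tau + tau (x) 1
   linear and to keep all words inside the alphabet where the bound on tau is available. *)

section \<open>Sums over a countable type\<close>

text \<open>Sums of values in [0, \<infinity>] over all elements of a type.  They always exist, and by
  Tonelli's theorem they can be split, exchanged and reindexed freely.\<close>

abbreviation esum :: "('a \<Rightarrow> ennreal) \<Rightarrow> ennreal" where
  "esum f \<equiv> (\<integral>\<^sup>+x. f x \<partial>count_space UNIV)"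

lemma esum_mono: "(\<And>x. f x \<le> g x) \<Longrightarrow> esum f \<le> esum g"
  by (rule nn_integral_mono) auto

lemma esum_add: "esum (\<lambda>x. f x + g x) = esum f + esum g"
  by (rule nn_integral_add) auto

lemma esum_sum: "esum (\<lambda>x. \<Sum>i\<in>I. f i x) = (\<Sum>i\<in>I. esum (f i))"
  by (rule nn_integral_sum) auto

lemma esum_cmult: "esum (\<lambda>x. c * f x) = c * esum f"
  by (rule nn_integral_cmult) auto

lemma esum_finite: "finite S \<Longrightarrow> (\<And>x. x \<notin> S \<Longrightarrow> f x = 0) \<Longrightarrow> esum f = (\<Sum>x\<in>S. f x)"
  by (rule nn_integral_count_space') auto

lemma esum_pair_fst: "esum (\<lambda>x. esum (\<lambda>y. f (x, y))) = esum f"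
  by (rule nn_integral_fst_count_space)

lemma esum_pair_snd: "esum (\<lambda>y. esum (\<lambda>x. f (x, y))) = esum f"
  by (rule nn_integral_snd_count_space)

section \<open>A weighted norm on the tensor product\<close>

definition weight :: "real \<Rightarrow> real \<Rightarrow> nat list \<times> nat list \<Rightarrow> real" where
  "weight a c p = a ^ length (fst p) * c ^ length (snd p)"

definition tnorm :: "real \<Rightarrow> real \<Rightarrow> ncpoly2 \<Rightarrow> ennreal" where
  "tnorm a c T = esum (\<lambda>p. ennreal (cmod (T p) * weight a c p))"

lemma weight_nonneg: "a \<ge> 0 \<Longrightarrow> c \<ge> 0 \<Longrightarrow> weight a c p \<ge> 0"
  by (simp add: weight_def)

lemma tnorm_sum:
  assumes "a \<ge> 0" "c \<ge> 0"
  shows "tnorm a c (\<lambda>x. \<Sum>j\<in>J. F j x) \<le> (\<Sum>j\<in>J. tnorm a c (F j))"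
proof -
  have "ennreal (cmod (\<Sum>j\<in>J. F j p) * weight a c p) \<le> (\<Sum>j\<in>J. ennreal (cmod (F j p) * weight a c p))"
    for p
  proof -
    have "cmod (\<Sum>j\<in>J. F j p) * weight a c p \<le> (\<Sum>j\<in>J. cmod (F j p) * weight a c p)"
      unfolding sum_distrib_right[symmetric]
      by (rule mult_right_mono[OF norm_sum weight_nonneg[OF assms]])
    then show ?thesis
      by (subst sum_ennreal) (auto intro: ennreal_leI simp: weight_nonneg[OF assms])
  qed
  then have "tnorm a c (\<lambda>x. \<Sum>j\<in>J. F j x) \<le> esum (\<lambda>p. \<Sum>j\<in>J. ennreal (cmod (F j p) * weight a c p))"
    unfolding tnorm_def by (rule esum_mono)
  also have "\<dots> = (\<Sum>j\<in>J. tnorm a c (F j))"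
    unfolding tnorm_def by (rule esum_sum)
  finally show ?thesis .
qed

lemma tnorm_add:
  assumes "a \<ge> 0" "c \<ge> 0"
  shows "tnorm a c (\<lambda>x. X x + Y x) \<le> tnorm a c X + tnorm a c Y"
  using tnorm_sum[OF assms, of "\<lambda>b. if b then X else Y" UNIV]
  by (simp add: UNIV_bool add.commute)

lemma tnorm_uminus: "tnorm a c (\<lambda>x. - X x) = tnorm a c X"
  by (simp add: tnorm_def)

lemma weight_split:
  assumes "i \<le> length w1" "j \<le> length w2"
  shows "weight a c (w1, w2) = weight a c (take i w1, drop j w2) * weight a c (drop i w1, take j w2)"
proof -
  have "a ^ length w1 = a ^ i * a ^ (length w1 - i)" "c ^ length w2 = c ^ (length w2 - j) * c ^ j"
    using assms by (simp_all flip: power_add)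
  then show ?thesis using assms by (simp add: weight_def min_def)
qed

lemma tmult_pointwise:
  assumes "a \<ge> 0" "c \<ge> 0"
  shows "ennreal (cmod (tmult X Y (w1, w2)) * weight a c (w1, w2)) \<le>
    (\<Sum>i\<le>length w1. \<Sum>j\<le>length w2.
       ennreal (cmod (X (take i w1, drop j w2)) * weight a c (take i w1, drop j w2)) *
       ennreal (cmod (Y (drop i w1, take j w2)) * weight a c (drop i w1, take j w2)))"
proof -
  have "cmod (tmult X Y (w1, w2)) * weight a c (w1, w2) \<le>
     (\<Sum>i\<le>length w1. \<Sum>j\<le>length w2.
        cmod (X (take i w1, drop j w2)) * cmod (Y (drop i w1, take j w2))) * weight a c (w1, w2)"
    unfolding tmult_def prod.case
    by (intro mult_right_mono weight_nonneg assms order_trans[OF norm_sum] sum_mono)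
       (simp_all add: norm_mult)
  also have "\<dots> = (\<Sum>i\<le>length w1. \<Sum>j\<le>length w2.
       (cmod (X (take i w1, drop j w2)) * weight a c (take i w1, drop j w2)) *
       (cmod (Y (drop i w1, take j w2)) * weight a c (drop i w1, take j w2)))"
    unfolding sum_distrib_right by (intro sum.cong refl) (simp add: weight_split mult_ac)
  finally have "ennreal (cmod (tmult X Y (w1, w2)) * weight a c (w1, w2)) \<le> ennreal \<dots>"
    by (rule ennreal_leI)
  also have "\<dots> = (\<Sum>i\<le>length w1. \<Sum>j\<le>length w2.
       ennreal (cmod (X (take i w1, drop j w2)) * weight a c (take i w1, drop j w2)) *
       ennreal (cmod (Y (drop i w1, take j w2)) * weight a c (drop i w1, take j w2)))"
    using assms by (simp add: ennreal_mult weight_nonneg sum_nonneg flip: sum_ennreal)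
  finally show ?thesis .
qed

lemma bij_cut_positions:
  "bij_betw (\<lambda>((u1, v1), (u2, v2)). ((u1 @ u2, v2 @ v1), (length u1, length v2))) UNIV
     {(W, ij). fst ij \<le> length (fst W) \<and> snd ij \<le> length (snd W)}"
  by (rule bij_betwI[where g = "\<lambda>((w1, w2), (i, j)). ((take i w1, drop j w2), (drop i w1, take j w2))"])
     (auto split: prod.splits)

lemma tnorm_tmult:
  assumes "a \<ge> 0" "c \<ge> 0"
  shows "tnorm a c (tmult X Y) \<le> tnorm a c X * tnorm a c Y"
proof -
  define fX where "fX p = ennreal (cmod (X p) * weight a c p)" for p
  define fY where "fY p = ennreal (cmod (Y p) * weight a c p)" for p
  define Cuts where "Cuts = {(W :: nat list \<times> nat list, ij :: nat \<times> nat).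
     fst ij \<le> length (fst W) \<and> snd ij \<le> length (snd W)}"
  define G where "G = (\<lambda>(W :: nat list \<times> nat list, (i :: nat, j :: nat)).
     fX (take i (fst W), drop j (snd W)) * fY (drop i (fst W), take j (snd W)))"
  have "tnorm a c (tmult X Y) \<le> esum (\<lambda>W. esum (\<lambda>ij. G (W, ij) * indicator Cuts (W, ij)))"
    unfolding tnorm_def
  proof (rule esum_mono)
    fix W :: "nat list \<times> nat list"
    obtain w1 w2 where W: "W = (w1, w2)" by fastforce
    have "esum (\<lambda>ij. G (W, ij) * indicator Cuts (W, ij))
        = (\<Sum>ij\<in>{..length w1} \<times> {..length w2}. G (W, ij) * indicator Cuts (W, ij))"
      by (rule esum_finite) (auto simp: Cuts_def W indicator_def)
    also have "\<dots> = (\<Sum>i\<le>length w1. \<Sum>j\<le>length w2. G (W, (i, j)))"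
      unfolding sum.cartesian_product by (rule sum.cong) (auto simp: Cuts_def W)
    finally show "ennreal (cmod (tmult X Y W) * weight a c W)
        \<le> esum (\<lambda>ij. G (W, ij) * indicator Cuts (W, ij))"
      using tmult_pointwise[OF assms, of X Y w1 w2] by (simp add: W G_def fX_def fY_def)
  qed
  also have "\<dots> = esum (\<lambda>z. G z * indicator Cuts z)"
    by (rule esum_pair_fst)
  also have "\<dots> = (\<integral>\<^sup>+z. G z \<partial>count_space Cuts)"
    by (simp add: nn_integral_count_space_indicator)
  also have "\<dots> = esum (\<lambda>z. G ((\<lambda>((u1, v1), (u2, v2)). ((u1 @ u2, v2 @ v1), (length u1, length v2))) z))"
    by (rule nn_integral_bij_count_space[symmetric]) (use bij_cut_positions in \<open>simp add: Cuts_def\<close>)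
  also have "\<dots> = esum (\<lambda>x. esum (\<lambda>y. fX x * fY y))"
    by (simp add: esum_pair_fst[of "\<lambda>z. fX (fst z) * fY (snd z)", simplified] G_def split_beta)
  also have "\<dots> = esum fX * esum fY"
    by (simp add: esum_cmult mult.commute[of _ "esum fY"])
  finally show ?thesis by (simp add: tnorm_def fX_def fY_def)
qed

section \<open>Matrices over the tensor product\<close>

definition mnorm :: "nat \<Rightarrow> real \<Rightarrow> real \<Rightarrow> tmat \<Rightarrow> ennreal" where
  "mnorm n a c M = (\<Sum>i<n. \<Sum>k<n. tnorm a c (M i k))"

definition mpow :: "nat \<Rightarrow> nat \<Rightarrow> tmat \<Rightarrow> tmat" where
  "mpow n k M = foldr (mat_mult n) (replicate k M) mat_one"

definition mdiff :: "tmat \<Rightarrow> tmat \<Rightarrow> tmat" where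
  "mdiff M N = (\<lambda>i k x. M i k x - N i k x)"

definition mtrace :: "nat \<Rightarrow> tmat \<Rightarrow> ncpoly2" where
  "mtrace n M = (\<lambda>x. \<Sum>i<n. M i i x)"

lemma mnorm_mult:
  assumes "a \<ge> 0" "c \<ge> 0"
  shows "mnorm n a c (mat_mult n M N) \<le> mnorm n a c M * mnorm n a c N"
proof -
  have "mnorm n a c (mat_mult n M N) \<le> (\<Sum>i<n. \<Sum>k<n. \<Sum>j<n. tnorm a c (M i j) * tnorm a c (N j k))"
    unfolding mnorm_def mat_mult_def
    by (intro sum_mono order_trans[OF tnorm_sum[OF assms]] tnorm_tmult[OF assms])
  also have "\<dots> \<le> (\<Sum>i<n. \<Sum>k<n. \<Sum>j<n. tnorm a c (M i j) * (\<Sum>j'<n. tnorm a c (N j' k)))"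
    by (intro sum_mono mult_left_mono) (auto intro: member_le_sum)
  also have "\<dots> = (\<Sum>i<n. \<Sum>j<n. \<Sum>k<n. tnorm a c (M i j) * (\<Sum>j'<n. tnorm a c (N j' k)))"
    by (rule sum.cong[OF refl], rule sum.swap)
  also have "\<dots> = (\<Sum>i<n. \<Sum>j<n. tnorm a c (M i j) * (\<Sum>k<n. \<Sum>j'<n. tnorm a c (N j' k)))"
    by (simp add: sum_distrib_left)
  also have "\<dots> = (\<Sum>i<n. \<Sum>j<n. tnorm a c (M i j)) * (\<Sum>k<n. \<Sum>j'<n. tnorm a c (N j' k))"
    by (simp add: sum_distrib_right)
  also have "(\<Sum>k<n. \<Sum>j'<n. tnorm a c (N j' k)) = mnorm n a c N"
    unfolding mnorm_def by (rule sum.swap)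
  finally show ?thesis by (simp only: mnorm_def)
qed

lemma mnorm_add:
  assumes "a \<ge> 0" "c \<ge> 0"
  shows "mnorm n a c (\<lambda>i k x. M i k x + N i k x) \<le> mnorm n a c M + mnorm n a c N"
  unfolding mnorm_def by (simp add: sum.distrib[symmetric] sum_mono tnorm_add[OF assms])

lemma tnorm_mtrace:
  assumes "a \<ge> 0" "c \<ge> 0"
  shows "tnorm a c (mtrace n M) \<le> mnorm n a c M"
  unfolding mnorm_def mtrace_def
  by (rule order_trans[OF tnorm_sum[OF assms]], rule sum_mono, rule member_le_sum) auto

lemma tmult_tone: "tmult X tone = X"
proof (rule ext, clarify)
  fix w1 w2 :: "nat list"
  have "tmult X tone (w1, w2) = (\<Sum>i\<le>length w1. \<Sum>j\<le>length w2.
      (if i = length w1 \<and> j = 0 then X (w1, w2) else 0))"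
    unfolding tmult_def tone_def by (simp, intro sum.cong refl) auto
  also have "\<dots> = X (w1, w2)"
  proof -
    have "(\<Sum>j\<le>length w2. if i = length w1 \<and> j = 0 then X (w1, w2) else 0)
        = (if i = length w1 then X (w1, w2) else 0)" for i
      by (cases "i = length w1") simp_all
    then show ?thesis by (simp add: sum.delta)
  qed
  finally show "tmult X tone (w1, w2) = X (w1, w2)" .
qed

lemma mat_mult_one: "k < n \<Longrightarrow> mat_mult n M mat_one i k x = M i k x"
proof -
  assume k: "k < n"
  have "mat_mult n M mat_one i k x = (\<Sum>j<n. if j = k then tmult (M i j) tone x else 0)"
    unfolding mat_mult_def mat_one_def by (intro sum.cong refl) (simp add: tmult_def)
  also have "\<dots> = M i k x" using k by (simp add: tmult_tone)
  finally show ?thesis .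
qed

lemma mpow_Suc: "mpow n (Suc k) M = mat_mult n M (mpow n k M)"
  by (simp add: mpow_def)

lemma mpow_1: "k < n \<Longrightarrow> mpow n (Suc 0) M i k x = M i k x"
  by (simp add: mpow_def mat_mult_one)

lemma mnorm_cong:
  "(\<And>i k. i < n \<Longrightarrow> k < n \<Longrightarrow> M i k = N i k) \<Longrightarrow> mnorm n a c M = mnorm n a c N"
  unfolding mnorm_def by simp

lemma tmult_diff:
  "tmult X Y x - tmult X' Y' x = tmult X (\<lambda>z. Y z - Y' z) x + tmult (\<lambda>z. X z - X' z) Y' x"
  unfolding tmult_def
  by (simp split: prod.splits add: sum_subtractf[symmetric] sum.distrib[symmetric] algebra_simps)

lemma mdiff_mat_mult:
  "mdiff (mat_mult n M N) (mat_mult n M' N') =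
   (\<lambda>i k x. mat_mult n M (mdiff N N') i k x + mat_mult n (mdiff M M') N' i k x)"
proof (intro ext)
  fix i k x
  show "mdiff (mat_mult n M N) (mat_mult n M' N') i k x =
      mat_mult n M (mdiff N N') i k x + mat_mult n (mdiff M M') N' i k x"
    unfolding mdiff_def mat_mult_def
    by (simp only: sum_subtractf[symmetric] sum.distrib[symmetric] tmult_diff)
qed

lemma mnorm_mpow:
  assumes "a \<ge> 0" "c \<ge> 0" "mnorm n a c G \<le> \<alpha>"
  shows "mnorm n a c (mpow n (Suc k) G) \<le> \<alpha> ^ Suc k"
proof (induction k)
  case 0
  have "mnorm n a c (mpow n (Suc 0) G) = mnorm n a c G"
    by (rule mnorm_cong) (simp add: fun_eq_iff mpow_1)
  then show ?case using assms by simp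
next
  case (Suc k)
  have "mnorm n a c (mpow n (Suc (Suc k)) G) \<le> mnorm n a c G * mnorm n a c (mpow n (Suc k) G)"
    unfolding mpow_Suc[of n "Suc k"] by (rule mnorm_mult[OF assms(1,2)])
  also have "\<dots> \<le> \<alpha> * \<alpha> ^ Suc k"
    by (rule mult_mono[OF assms(3) Suc.IH]) auto
  finally show ?case by simp
qed

text \<open>Telescoping: G^m - F^m = sum_k G^k (G - F) F^(m-k-1), estimated in norm.\<close>

lemma mnorm_mpow_diff:
  assumes ac: "a \<ge> 0" "c \<ge> 0" and G: "mnorm n a c G \<le> \<alpha>" and F: "mnorm n a c F \<le> \<beta>"
    and GF: "mnorm n a c (mdiff G F) \<le> \<delta>"
  shows "mnorm n a c (mdiff (mpow n (Suc k) G) (mpow n (Suc k) F))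
      \<le> (\<Sum>l<Suc k. \<alpha> ^ l * \<beta> ^ (Suc k - l - 1) * \<delta>)"
proof (induction k)
  case 0
  have "mnorm n a c (mdiff (mpow n (Suc 0) G) (mpow n (Suc 0) F)) = mnorm n a c (mdiff G F)"
    by (rule mnorm_cong) (simp add: fun_eq_iff mdiff_def mpow_1)
  then show ?case using GF by simp
next
  case (Suc k)
  let ?PG = "mpow n (Suc k) G" and ?PF = "mpow n (Suc k) F"
  have "mnorm n a c (mdiff (mpow n (Suc (Suc k)) G) (mpow n (Suc (Suc k)) F))
      \<le> mnorm n a c (mat_mult n G (mdiff ?PG ?PF)) + mnorm n a c (mat_mult n (mdiff G F) ?PF)"
    unfolding mpow_Suc[of n "Suc k"] mdiff_mat_mult by (rule mnorm_add[OF ac])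
  also have "\<dots> \<le> \<alpha> * (\<Sum>l<Suc k. \<alpha> ^ l * \<beta> ^ (Suc k - l - 1) * \<delta>) + \<delta> * \<beta> ^ Suc k"
    by (intro add_mono order_trans[OF mnorm_mult[OF ac]] mult_mono G GF Suc.IH
        mnorm_mpow[OF ac F]) simp_all
  also have "\<dots> = (\<Sum>l<Suc (Suc k). \<alpha> ^ l * \<beta> ^ (Suc (Suc k) - l - 1) * \<delta>)"
  proof -
    have shift: "(\<Sum>l<Suc k. \<alpha> ^ Suc l * \<beta> ^ (Suc (Suc k) - Suc l - 1) * \<delta>)
        = \<alpha> * (\<Sum>l<Suc k. \<alpha> ^ l * \<beta> ^ (Suc k - l - 1) * \<delta>)"
      unfolding sum_distrib_left by (rule sum.cong[OF refl]) (simp add: mult_ac)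
    show ?thesis
      by (subst sum.lessThan_Suc_shift) (simp only: shift, simp add: add.commute mult.commute)
  qed
  finally show ?case .
qed

section \<open>Bounded supports\<close>

text \<open>This is preserved by all operations we use, and it makes the sums in
  the definition of 1 \<otimes> \<tau> + \<tau> \<otimes> 1 finite.\<close>

definition bounded_support :: "nat \<Rightarrow> nat \<Rightarrow> ncpoly2 \<Rightarrow> bool" where
  "bounded_support n D T \<longleftrightarrow> (\<forall>u v. T (u, v) \<noteq> 0 \<longrightarrow>
     set u \<subseteq> {..<n} \<and> set v \<subseteq> {..<n} \<and> length u + length v \<le> D)"

definition mbounded_support :: "nat \<Rightarrow> nat \<Rightarrow> tmat \<Rightarrow> bool" where
  "mbounded_support n D M \<longleftrightarrow> (\<forall>i k. bounded_support n D (M i k))"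

lemma bounded_supportD:
  "bounded_support n D T \<Longrightarrow> T (u, v) \<noteq> 0 \<Longrightarrow>
   set u \<subseteq> {..<n} \<and> set v \<subseteq> {..<n} \<and> length u + length v \<le> D"
  by (simp add: bounded_support_def)

lemma bounded_support_sum:
  "(\<And>j. j \<in> J \<Longrightarrow> bounded_support n D (F j)) \<Longrightarrow> bounded_support n D (\<lambda>x. \<Sum>j\<in>J. F j x)"
  unfolding bounded_support_def by (metis (no_types, lifting) sum.neutral)

lemma bounded_support_diff:
  "bounded_support n D X \<Longrightarrow> bounded_support n D Y \<Longrightarrow> bounded_support n D (\<lambda>x. X x - Y x)"
  unfolding bounded_support_def by (metis diff_0_right diff_self)

lemma bounded_support_tmult:
  assumes X: "bounded_support n D1 X" and Y: "bounded_support n D2 Y"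
  shows "bounded_support n (D1 + D2) (tmult X Y)"
  unfolding bounded_support_def
proof (intro allI impI)
  fix w1 w2 :: "nat list"
  assume "tmult X Y (w1, w2) \<noteq> 0"
  then obtain i where "(\<Sum>j\<le>length w2. X (take i w1, drop j w2) * Y (drop i w1, take j w2)) \<noteq> 0"
    unfolding tmult_def by (auto elim: sum.not_neutral_contains_not_neutral)
  then obtain j where "X (take i w1, drop j w2) * Y (drop i w1, take j w2) \<noteq> 0"
    by (auto elim: sum.not_neutral_contains_not_neutral)
  then have "X (take i w1, drop j w2) \<noteq> 0" "Y (drop i w1, take j w2) \<noteq> 0" by auto
  then have x: "set (take i w1) \<subseteq> {..<n} \<and> set (drop j w2) \<subseteq> {..<n} \<and>
      length (take i w1) + length (drop j w2) \<le> D1"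
    and y: "set (drop i w1) \<subseteq> {..<n} \<and> set (take j w2) \<subseteq> {..<n} \<and>
      length (drop i w1) + length (take j w2) \<le> D2"
    using bounded_supportD[OF X] bounded_supportD[OF Y] by blast+
  have "set w1 = set (take i w1) \<union> set (drop i w1)" "set w2 = set (take j w2) \<union> set (drop j w2)"
    by (metis append_take_drop_id set_append)+
  moreover have "length w1 + length w2 \<le> D1 + D2"
    using x y by (simp add: min_def split: if_splits)
  ultimately show "set w1 \<subseteq> {..<n} \<and> set w2 \<subseteq> {..<n} \<and> length w1 + length w2 \<le> D1 + D2"
    using x y by auto
qed

lemma mbounded_support_mult:
  "mbounded_support n D1 M \<Longrightarrow> mbounded_support n D2 N \<Longrightarrow> mbounded_support n (D1 + D2) (mat_mult n M N)"
  unfolding mbounded_support_def mat_mult_def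
  by (intro allI bounded_support_sum bounded_support_tmult) auto

lemma mbounded_support_mpow:
  "mbounded_support n D M \<Longrightarrow> mbounded_support n (k * D) (mpow n k M)"
proof (induction k)
  case 0
  then show ?case by (simp add: mpow_def mbounded_support_def mat_one_def bounded_support_def tone_def)
next
  case (Suc k)
  then show ?case by (simp add: mpow_Suc mbounded_support_mult)
qed

lemma bounded_support_mtrace: "mbounded_support n D M \<Longrightarrow> bounded_support n D (mtrace n M)"
  unfolding mtrace_def mbounded_support_def by (intro bounded_support_sum) auto

lemma bounded_support_finite:
  assumes "bounded_support n D T"
  shows "finite {v. T (w, v) \<noteq> 0}" "finite {u. T (u, w) \<noteq> 0}"
  by (rule finite_subset[OF _ finite_lists_length_le[of "{..<n}" D]];
      auto dest: bounded_supportD[OF assms])+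

lemma set_rotate_insert: "set (drop l w @ i # take l w) = insert i (set w)"
  by (metis Un_commute append_take_drop_id set_append set_simps(2) insert_is_Un Un_insert_right)

lemma mbounded_support_JD:
  assumes "is_ncpoly n g" "\<And>q. g q \<noteq> 0 \<Longrightarrow> length q \<le> D"
  shows "mbounded_support n D (JD n (Sigma_op g))"
  unfolding mbounded_support_def bounded_support_def JD_def ddiff_def cycD_def
proof (intro allI impI, simp only: split)
  fix i j :: nat and u v :: "nat list"
  let ?q = "\<lambda>l. drop l (u @ j # v) @ i # take l (u @ j # v)"
  assume "(\<Sum>l\<le>length (u @ j # v). Sigma_op g (?q l)) \<noteq> 0"
  then obtain l where "Sigma_op g (?q l) \<noteq> 0"
    by (meson sum.not_neutral_contains_not_neutral)
  then have gq: "g (?q l) \<noteq> 0"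
    by (auto simp: Sigma_op_def split: if_splits)
  then have "set (?q l) \<subseteq> {..<n}"
    using assms(1) unfolding is_ncpoly_def supp_def by blast
  then have "set u \<subseteq> {..<n} \<and> set v \<subseteq> {..<n}"
    by (simp only: set_rotate_insert) auto
  moreover have "length (?q l) \<le> D" using assms(2) gq by blast
  ultimately show "set u \<subseteq> {..<n} \<and> set v \<subseteq> {..<n} \<and> length u + length v \<le> D" by simp
qed

section \<open>The functional 1 \<otimes> \<tau> + \<tau> \<otimes> 1\<close>

text \<open>On tensors of bounded support the finite sums defining 1 \<otimes> \<tau> + \<tau> \<otimes> 1 can be taken over
  one fixed finite set of words, hence the functional is linear.\<close>

lemma one_tau_tau_one_diff:
  assumes "bounded_support n D T1" "bounded_support n D T2"
  shows "one_tau_tau_one tau T1 w - one_tau_tau_one tau T2 w = one_tau_tau_one tau (\<lambda>x. T1 x - T2 x) w"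
proof -
  define V where "V = {xs. set xs \<subseteq> {..<n} \<and> length xs \<le> D}"
  have fV: "finite V" unfolding V_def by (rule finite_lists_length_le) simp
  have row: "(\<Sum>v\<in>{v. T (w, v) \<noteq> 0}. T (w, v) * tau v) = (\<Sum>v\<in>V. T (w, v) * tau v)"
    and col: "(\<Sum>u\<in>{u. T (u, w) \<noteq> 0}. tau u * T (u, w)) = (\<Sum>u\<in>V. tau u * T (u, w))"
    if "bounded_support n D T" for T
    by (rule sum.mono_neutral_left[OF fV]; auto simp: V_def dest!: bounded_supportD[OF that])+
  have diff: "bounded_support n D (\<lambda>x. T1 x - T2 x)" by (rule bounded_support_diff[OF assms])
  show ?thesis
    unfolding one_tau_tau_one_def row[OF assms(1)] row[OF assms(2)] col[OF assms(1)] col[OF assms(2)]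
      row[OF diff] col[OF diff]
    by (simp add: sum_subtractf algebra_simps)
qed

lemma normA_le_esum: "A \<ge> 0 \<Longrightarrow> ennreal (normA A P) \<le> esum (\<lambda>w. ennreal (cmod (P w) * A ^ length w))"
proof (cases "finite (supp P)")
  case True
  assume A: "A \<ge> 0"
  have "ennreal (normA A P) = (\<Sum>w\<in>supp P. ennreal (cmod (P w) * A ^ length w))"
    unfolding normA_def using A by (subst sum_ennreal) auto
  also have "\<dots> = esum (\<lambda>w. ennreal (cmod (P w) * A ^ length w))"
    by (rule esum_finite[symmetric, OF True]) (simp add: supp_def)
  finally show ?thesis by simp
qed (simp add: normA_def)

lemma tau_pairing_bound:
  assumes fin: "finite {v. h v \<noteq> 0}" and tau: "\<And>v. h v \<noteq> 0 \<Longrightarrow> cmod (tau v) \<le> C0 ^ length v"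
    and s: "s \<ge> 0" and C0: "C0 \<ge> 0"
  shows "ennreal (cmod (\<Sum>v\<in>{v. h v \<noteq> 0}. h v * tau v) * s)
      \<le> esum (\<lambda>v. ennreal (cmod (h v) * (s * C0 ^ length v)))"
proof -
  have "cmod (\<Sum>v\<in>{v. h v \<noteq> 0}. h v * tau v) * s \<le> (\<Sum>v\<in>{v. h v \<noteq> 0}. cmod (h v) * C0 ^ length v) * s"
    by (intro mult_right_mono s order_trans[OF norm_sum] sum_mono)
       (auto simp: norm_mult intro: mult_left_mono tau)
  also have "\<dots> = (\<Sum>v\<in>{v. h v \<noteq> 0}. cmod (h v) * (s * C0 ^ length v))"
    unfolding sum_distrib_right by (simp add: mult_ac)
  finally have "ennreal (cmod (\<Sum>v\<in>{v. h v \<noteq> 0}. h v * tau v) * s) \<le> ennreal \<dots>"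
    by (rule ennreal_leI)
  also have "\<dots> = (\<Sum>v\<in>{v. h v \<noteq> 0}. ennreal (cmod (h v) * (s * C0 ^ length v)))"
    using s C0 by (simp flip: sum_ennreal)
  also have "\<dots> = esum (\<lambda>v. ennreal (cmod (h v) * (s * C0 ^ length v)))"
    by (rule esum_finite[symmetric, OF fin]) simp
  finally show ?thesis .
qed

lemma normA_one_tau_tau_one:
  assumes T: "bounded_support n D T" and A: "A \<ge> 0" and C0: "C0 \<ge> 0"
    and tau_bd: "\<And>q. set q \<subseteq> {..<n} \<Longrightarrow> cmod (tau q) \<le> C0 ^ length q"
  shows "ennreal (normA A (one_tau_tau_one tau T)) \<le> tnorm A C0 T + tnorm C0 A T"
proof -
  have pointwise: "ennreal (cmod (one_tau_tau_one tau T w) * A ^ length w) \<le>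
      esum (\<lambda>v. ennreal (cmod (T (w, v)) * weight A C0 (w, v))) +
      esum (\<lambda>u. ennreal (cmod (T (u, w)) * weight C0 A (u, w)))" for w
  proof -
    let ?row = "\<Sum>v\<in>{v. T (w, v) \<noteq> 0}. T (w, v) * tau v"
    let ?col = "\<Sum>u\<in>{u. T (u, w) \<noteq> 0}. T (u, w) * tau u"
    have "cmod (one_tau_tau_one tau T w) * A ^ length w
        \<le> cmod ?row * A ^ length w + cmod ?col * A ^ length w"
      unfolding one_tau_tau_one_def distrib_right[symmetric] mult.commute[of "tau _"]
      using A by (intro mult_right_mono norm_triangle_ineq) simp
    then have "ennreal (cmod (one_tau_tau_one tau T w) * A ^ length w)
        \<le> ennreal (cmod ?row * A ^ length w) + ennreal (cmod ?col * A ^ length w)"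
      using A by (simp flip: ennreal_plus add: ennreal_leI)
    also have "\<dots> \<le> esum (\<lambda>v. ennreal (cmod (T (w, v)) * (A ^ length w * C0 ^ length v))) +
        esum (\<lambda>u. ennreal (cmod (T (u, w)) * (A ^ length w * C0 ^ length u)))"
      using bounded_support_finite[OF T] bounded_supportD[OF T] A C0
      by (intro add_mono tau_pairing_bound tau_bd) auto
    finally show ?thesis by (simp add: weight_def mult_ac)
  qed
  have "ennreal (normA A (one_tau_tau_one tau T))
      \<le> esum (\<lambda>w. ennreal (cmod (one_tau_tau_one tau T w) * A ^ length w))"
    by (rule normA_le_esum[OF A])
  also have "\<dots> \<le> esum (\<lambda>w. esum (\<lambda>v. ennreal (cmod (T (w, v)) * weight A C0 (w, v))) +
      esum (\<lambda>u. ennreal (cmod (T (u, w)) * weight C0 A (u, w))))"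
    by (rule esum_mono[OF pointwise])
  also have "\<dots> = tnorm A C0 T + tnorm C0 A T"
    unfolding esum_add tnorm_def
    using esum_pair_fst[of "\<lambda>p. ennreal (cmod (T p) * weight A C0 p)"]
      esum_pair_snd[of "\<lambda>p. ennreal (cmod (T p) * weight C0 A p)"] by simp
  finally show ?thesis .
qed

section \<open>The key estimate for the Jacobian of the cyclic gradient\<close>

text \<open>geom_sum a c K is the total weight of the K ways to cut a word of length K into a
  left part, one distinguished letter, and a right part.\<close>

definition geom_sum :: "real \<Rightarrow> real \<Rightarrow> nat \<Rightarrow> real" where
  "geom_sum a c K = (\<Sum>t<K. a ^ t * c ^ (K - 1 - t))"

lemma geom_sum_Suc: "geom_sum a c (Suc K) = a ^ K + c * geom_sum a c K"
proof -
  have "geom_sum a c (Suc K) = a ^ K + (\<Sum>t<K. a ^ t * c ^ (K - t))"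
    unfolding geom_sum_def by (simp add: add.commute)
  also have "(\<Sum>t<K. a ^ t * c ^ (K - t)) = c * geom_sum a c K"
    unfolding geom_sum_def sum_distrib_left
    by (rule sum.cong[OF refl]) (simp add: Suc_diff_Suc power_Suc[symmetric] mult_ac del: power_Suc)
  finally show ?thesis .
qed

lemma geom_sum_bound:
  assumes "0 \<le> C0" "2 * C0 \<le> A" "A > 0"
  shows "A * geom_sum A C0 K \<le> 2 * A ^ K"
proof (induction K)
  case 0
  then show ?case by (simp add: geom_sum_def)
next
  case (Suc K)
  have "A * geom_sum A C0 (Suc K) = A ^ Suc K + C0 * (A * geom_sum A C0 K)"
    by (simp add: geom_sum_Suc algebra_simps)
  also have "\<dots> \<le> A ^ Suc K + C0 * (2 * A ^ K)"
    using Suc.IH assms by (intro add_left_mono mult_left_mono) auto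
  also have "\<dots> \<le> A ^ Suc K + A ^ Suc K"
    using assms by (simp add: mult.assoc[symmetric])
  finally show ?case by simp
qed

lemma geom_sum_sym: "geom_sum a c K = geom_sum c a K"
proof -
  have "geom_sum c a K = (\<Sum>i<K. c ^ (K - Suc i) * a ^ (K - 1 - (K - Suc i)))"
    unfolding geom_sum_def by (rule sum.nat_diff_reindex[symmetric])
  also have "\<dots> = geom_sum a c K"
    unfolding geom_sum_def by (rule sum.cong[OF refl]) (simp add: mult.commute)
  finally show ?thesis by simp
qed

lemma geom_sum_nonneg: "a \<ge> 0 \<Longrightarrow> c \<ge> 0 \<Longrightarrow> geom_sum a c K \<ge> 0"
  unfolding geom_sum_def by (intro sum_nonneg) auto

definition cut_weight :: "real \<Rightarrow> real \<Rightarrow> nat \<Rightarrow> nat list \<Rightarrow> nat list \<times> nat list \<Rightarrow> ennreal" where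
  "cut_weight a c j R p = (if fst p @ j # snd p = R then ennreal (weight a c p) else 0)"

lemma esum_splittings:
  assumes "a \<ge> 0" "c \<ge> 0"
  shows "(\<Sum>j<n. esum (cut_weight a c j R)) \<le> ennreal (geom_sum a c (length R))"
proof -
  define Splittings where "Splittings = (\<lambda>t. (take t R, drop (Suc t) R)) ` {..<length R}"
  have inj: "inj_on (\<lambda>t. (take t R, drop (Suc t) R)) {..<length R}"
    by (rule inj_onI) (metis fst_conv length_take min.absorb4 lessThan_iff)
  have pointwise: "(\<Sum>j<n. (if fst p @ j # snd p = R then ennreal (weight a c p) else 0))
      \<le> (if p \<in> Splittings then ennreal (weight a c p) else 0)" for p
  proof (cases "\<exists>j. fst p @ j # snd p = R")
    case True
    then obtain j0 where j0: "fst p @ j0 # snd p = R" by blast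
    have "p \<in> Splittings"
    proof -
      have "length (fst p) < length R" using j0 by auto
      moreover have "p = (take (length (fst p)) R, drop (Suc (length (fst p))) R)" using j0 by auto
      ultimately show ?thesis unfolding Splittings_def by blast
    qed
    have "(\<Sum>j<n. (if fst p @ j # snd p = R then ennreal (weight a c p) else 0)) =
          (\<Sum>j<n. (if j = j0 then ennreal (weight a c p) else 0))"
      by (rule sum.cong[OF refl]) (use j0 in auto)
    also have "\<dots> \<le> ennreal (weight a c p)" by simp
    finally show ?thesis using \<open>p \<in> Splittings\<close> by simp
  next
    case False
    then show ?thesis by simp
  qed
  have "(\<Sum>j<n. esum (\<lambda>p. if fst p @ j # snd p = R then ennreal (weight a c p) else 0))
      = esum (\<lambda>p. \<Sum>j<n. (if fst p @ j # snd p = R then ennreal (weight a c p) else 0))"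
    by (rule esum_sum[symmetric])
  also have "\<dots> \<le> esum (\<lambda>p. if p \<in> Splittings then ennreal (weight a c p) else 0)"
    by (rule esum_mono[OF pointwise])
  also have "\<dots> = (\<Sum>p\<in>Splittings. if p \<in> Splittings then ennreal (weight a c p) else 0)"
    by (rule esum_finite) (auto simp: Splittings_def)
  also have "\<dots> = (\<Sum>p\<in>Splittings. ennreal (weight a c p))" by simp
  also have "\<dots> = (\<Sum>t<length R. ennreal (weight a c (take t R, drop (Suc t) R)))"
    unfolding Splittings_def by (subst sum.reindex[OF inj]) simp
  also have "\<dots> = ennreal (\<Sum>t<length R. weight a c (take t R, drop (Suc t) R))"
    by (rule sum_ennreal) (simp add: weight_nonneg assms)
  also have "(\<Sum>t<length R. weight a c (take t R, drop (Suc t) R)) = geom_sum a c (length R)"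
    unfolding geom_sum_def weight_def by (rule sum.cong[OF refl]) auto
  finally show ?thesis unfolding cut_weight_def .
qed

lemma rotation_inverse:
  assumes "drop l w @ i # take l w = q" "l \<le> length w"
  shows "length q = Suc (length w) \<and> w = drop (length q - l) q @ take (length q - 1 - l) q
    \<and> i = q ! (length q - 1 - l)"
proof -
  define d where "d = drop l w"
  define t where "t = take l w"
  have q: "q = d @ i # t" using assms(1) by (simp add: d_def t_def)
  have lt: "length t = l" using assms(2) by (simp add: t_def)
  have w: "w = t @ d" by (simp add: d_def t_def)
  have lq: "length q = Suc (length w)" using q w by simp
  have e1: "length q - l = Suc (length d)" using q lt by simp
  have e2: "length q - 1 - l = length d" using q lt by simp
  have "take (length q - 1 - l) q = d" unfolding e2 by (simp add: q)
  moreover have "drop (length q - l) q = t" unfolding e1 by (simp add: q)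
  moreover have "q ! (length q - 1 - l) = i" unfolding e2 by (simp add: q)
  ultimately show ?thesis using lq w by simp
qed

lemma rotation_count:
  fixes W :: ennreal
  shows "(\<Sum>l\<le>length w. if drop l w @ i # take l w = q then W else 0) \<le>
    (\<Sum>l<length q. if w = drop (length q - l) q @ take (length q - 1 - l) q \<and> i = q ! (length q - 1 - l)
       then W else 0)"
proof (cases "length q = Suc (length w)")
  case True
  have e: "{..length w} = {..<length q}" using True by auto
  show ?thesis unfolding e
  proof (rule sum_mono)
    fix l assume "l \<in> {..<length q}"
    then have l: "l \<le> length w" using True by simp
    show "(if drop l w @ i # take l w = q then W else 0) \<le>
       (if w = drop (length q - l) q @ take (length q - 1 - l) q \<and> i = q ! (length q - 1 - l)
        then W else 0)"
    proof (cases "drop l w @ i # take l w = q")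
      case True
      have Q: "w = drop (length q - l) q @ take (length q - 1 - l) q \<and> i = q ! (length q - 1 - l)"
        using rotation_inverse[OF True l] by blast
      show ?thesis by (simp only: if_P[OF True] if_P[OF Q] order_refl)
    qed simp
  qed
next
  case False
  have "(\<Sum>l\<le>length w. if drop l w @ i # take l w = q then W else 0) = 0"
  proof (rule sum.neutral, rule ballI)
    fix l assume "l \<in> {..length w}"
    then have l: "l \<le> length w" by simp
    show "(if drop l w @ i # take l w = q then W else 0) = 0"
    proof (cases "drop l w @ i # take l w = q")
      case True
      have "length q = Suc (length w)" using rotation_inverse[OF True l] by blast
      with False show ?thesis by blast
    qed simp
  qed
  then show ?thesis by simp
qed

lemma sum_swap3:
  "(\<Sum>i\<in>I. \<Sum>j\<in>J. \<Sum>l\<in>L. F i j l) = (\<Sum>l\<in>L. \<Sum>i\<in>I. \<Sum>j\<in>J. F i j l)"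
  by (subst sum.swap) (simp only: sum.swap[of _ J L])

text \<open>rot_weight a c i j q p is the weight of p = (u, v) times the number of rotations of
  u X_j v which, with X_i inserted, give the monomial q.  This is the multiplicity with which the
  coefficient of q enters the (i, j) entry of JD at p.\<close>

definition rot_weight :: "real \<Rightarrow> real \<Rightarrow> nat \<Rightarrow> nat \<Rightarrow> nat list \<Rightarrow> nat list \<times> nat list \<Rightarrow> ennreal" where
  "rot_weight a c i j q p = (\<Sum>l\<le>length (fst p @ j # snd p).
     if drop l (fst p @ j # snd p) @ i # take l (fst p @ j # snd p) = q then ennreal (weight a c p) else 0)"

text \<open>Total weight with which a single monomial q enters the entries of JD: one term for
  each of the |q| rotations, each splitting the remaining word in at most |q| - 1 ways.\<close>

lemma JD_monomial_weight:
  assumes "a \<ge> 0" "c \<ge> 0"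
  shows "(\<Sum>i<n. \<Sum>j<n. esum (rot_weight a c i j q))
    \<le> of_nat (length q) * ennreal (geom_sum a c (length q - 1))"
proof -
  define k where "k = length q"
  define R where "R l = drop (k - l) q @ take (k - 1 - l) q" for l
  define letter where "letter l = q ! (k - 1 - l)" for l
  have rotations: "rot_weight a c i j q p \<le> (\<Sum>l<k. if i = letter l then cut_weight a c j (R l) p else 0)"
    for i j p
  proof -
    have "rot_weight a c i j q p
        \<le> (\<Sum>l<k. if fst p @ j # snd p = R l \<and> i = letter l then ennreal (weight a c p) else 0)"
      unfolding rot_weight_def k_def R_def letter_def by (rule rotation_count)
    also have "\<dots> = (\<Sum>l<k. if i = letter l then cut_weight a c j (R l) p else 0)"
      by (intro sum.cong refl) (simp add: cut_weight_def)
    finally show ?thesis .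
  qed
  have per_rotation: "(\<Sum>i<n. \<Sum>j<n. esum (\<lambda>p. if i = letter l then cut_weight a c j (R l) p else 0))
      \<le> ennreal (geom_sum a c (k - 1))" if "l < k" for l
  proof -
    have "(\<Sum>i<n. \<Sum>j<n. esum (\<lambda>p. if i = letter l then cut_weight a c j (R l) p else 0))
        = (\<Sum>i<n. if i = letter l then (\<Sum>j<n. esum (cut_weight a c j (R l))) else 0)"
      by (intro sum.cong refl) auto
    also have "\<dots> \<le> (\<Sum>j<n. esum (cut_weight a c j (R l)))"
      by simp
    also have "\<dots> \<le> ennreal (geom_sum a c (length (R l)))"
      by (rule esum_splittings[OF assms])
    also have "length (R l) = k - 1" using that by (simp add: R_def k_def)
    finally show ?thesis .
  qed
  have "(\<Sum>i<n. \<Sum>j<n. esum (rot_weight a c i j q))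
      \<le> (\<Sum>i<n. \<Sum>j<n. esum (\<lambda>p. \<Sum>l<k. if i = letter l then cut_weight a c j (R l) p else 0))"
    by (intro sum_mono esum_mono rotations)
  also have "\<dots> = (\<Sum>l<k. \<Sum>i<n. \<Sum>j<n. esum (\<lambda>p. if i = letter l then cut_weight a c j (R l) p else 0))"
    by (simp only: esum_sum sum_swap3[where I = "{..<n}"])
  also have "\<dots> \<le> (\<Sum>l<k. ennreal (geom_sum a c (k - 1)))"
    by (intro sum_mono per_rotation) simp
  also have "\<dots> = of_nat k * ennreal (geom_sum a c (k - 1))" by simp
  finally show ?thesis by (simp add: k_def)
qed

lemma JD_apply: "JD n P i j p = (\<Sum>l\<le>length (fst p @ j # snd p).
     P (drop l (fst p @ j # snd p) @ i # take l (fst p @ j # snd p)))"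
  by (simp add: JD_def ddiff_def cycD_def split_beta)

lemma JD_coefficient_bound:
  assumes fin: "finite (supp P)" and a: "a \<ge> 0" "c \<ge> 0"
  shows "ennreal (cmod (JD n P i j p) * weight a c p)
    \<le> (\<Sum>q\<in>supp P. ennreal (cmod (P q)) * rot_weight a c i j q p)"
proof -
  define e where "e q = ennreal (cmod (P q))" for q
  define w where "w = fst p @ j # snd p"
  have expand: "e x * W = (\<Sum>q\<in>supp P. e q * (if x = q then W else 0))" for x W
  proof (cases "x \<in> supp P")
    case True
    have "(\<Sum>q\<in>supp P. e q * (if x = q then W else 0)) = (\<Sum>q\<in>supp P. if q = x then e x * W else 0)"
      by (intro sum.cong refl) auto
    then show ?thesis using True fin by simp
  next
    case False
    then have "e x = 0" "(\<Sum>q\<in>supp P. e q * (if x = q then W else 0)) = 0"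
      by (auto simp: e_def supp_def intro!: sum.neutral)
    then show ?thesis by simp
  qed
  have "cmod (JD n P i j p) * weight a c p
      \<le> (\<Sum>l\<le>length w. cmod (P (drop l w @ i # take l w))) * weight a c p"
    unfolding JD_apply w_def[symmetric] by (rule mult_right_mono[OF norm_sum weight_nonneg[OF a]])
  then have "ennreal (cmod (JD n P i j p) * weight a c p)
      \<le> ennreal ((\<Sum>l\<le>length w. cmod (P (drop l w @ i # take l w))) * weight a c p)"
    by (rule ennreal_leI)
  also have "\<dots> = (\<Sum>l\<le>length w. e (drop l w @ i # take l w) * ennreal (weight a c p))"
    unfolding e_def sum_distrib_right
    by (subst sum_ennreal[symmetric]) (auto simp: weight_nonneg[OF a] ennreal_mult)
  also have "\<dots> = (\<Sum>l\<le>length w. \<Sum>q\<in>supp P.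
      e q * (if drop l w @ i # take l w = q then ennreal (weight a c p) else 0))"
    by (intro sum.cong refl expand)
  also have "\<dots> = (\<Sum>q\<in>supp P. e q * rot_weight a c i j q p)"
    unfolding rot_weight_def w_def[symmetric] sum_distrib_left by (rule sum.swap)
  finally show ?thesis by (simp only: e_def)
qed

lemma mnorm_JD:
  assumes fin: "finite (supp P)" and a: "a \<ge> 0" "c \<ge> 0"
  shows "mnorm n a c (JD n P) \<le> (\<Sum>q\<in>supp P. ennreal (cmod (P q)) *
      (of_nat (length q) * ennreal (geom_sum a c (length q - 1))))"
proof -
  let ?e = "\<lambda>q. ennreal (cmod (P q))"
  have "mnorm n a c (JD n P) \<le> (\<Sum>i<n. \<Sum>j<n. esum (\<lambda>p. \<Sum>q\<in>supp P. ?e q * rot_weight a c i j q p))"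
    unfolding mnorm_def tnorm_def by (intro sum_mono esum_mono JD_coefficient_bound[OF fin a])
  also have "\<dots> = (\<Sum>q\<in>supp P. ?e q * (\<Sum>i<n. \<Sum>j<n. esum (rot_weight a c i j q)))"
    by (simp only: esum_sum esum_cmult sum_swap3[where I = "{..<n}"] sum_distrib_left)
  also have "\<dots> \<le> (\<Sum>q\<in>supp P. ?e q * (of_nat (length q) * ennreal (geom_sum a c (length q - 1))))"
    by (intro sum_mono mult_left_mono JD_monomial_weight[OF a]) simp
  finally show ?thesis .
qed

text \<open>For a single monomial q the factor |q| produced by the rotations is cancelled by \<Sigma>, and
  the geometric sum is at most 2 A^(|q| - 2).\<close>

lemma Sigma_monomial_weight:
  assumes C0: "0 \<le> C0" "2 * C0 \<le> A" and A: "A > 0" and q: "q \<noteq> []"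
  shows "cmod (Sigma_op g q) * real (length q) * geom_sum A C0 (length q - 1)
      \<le> cmod (g q) * (2 / A ^ 2 * A ^ length q)"
proof -
  obtain K where K: "length q = Suc K" using q by (cases q) auto
  have "A * geom_sum A C0 K \<le> 2 * A ^ K" by (rule geom_sum_bound[OF C0 A])
  then have geom: "geom_sum A C0 K \<le> 2 / A ^ 2 * A ^ length q"
    using A K by (simp add: field_simps power2_eq_square)
  have "cmod (Sigma_op g q) * real (length q) = cmod (g q)"
    using q by (simp add: Sigma_op_def norm_divide)
  then have "cmod (Sigma_op g q) * real (length q) * geom_sum A C0 (length q - 1)
      = cmod (g q) * geom_sum A C0 K"
    using K by simp
  also have "\<dots> \<le> cmod (g q) * (2 / A ^ 2 * A ^ length q)"
    by (rule mult_left_mono[OF geom norm_ge_zero])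
  finally show ?thesis .
qed

lemma mnorm_JD_Sigma:
  assumes fin: "finite (supp g)" and A: "A > 0" and C0: "0 \<le> C0" "2 * C0 \<le> A"
    and ac: "(a, c) \<in> {(A, C0), (C0, A)}"
  shows "mnorm n a c (JD n (Sigma_op g)) \<le> ennreal (2 / A ^ 2 * normA A g)"
proof -
  have a: "a \<ge> 0" "c \<ge> 0" using ac A C0 by auto
  have geom: "geom_sum a c K = geom_sum A C0 K" for K using ac geom_sum_sym by auto
  have sub: "supp (Sigma_op g) \<subseteq> supp g" by (auto simp: supp_def Sigma_op_def)
  have monomial: "ennreal (cmod (Sigma_op g q)) *
        (of_nat (length q) * ennreal (geom_sum a c (length q - 1)))
      \<le> ennreal (cmod (g q) * (2 / A ^ 2 * A ^ length q))" if "q \<in> supp (Sigma_op g)" for q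
  proof -
    have "q \<noteq> []" using that by (auto simp: supp_def Sigma_op_def)
    have "ennreal (cmod (Sigma_op g q)) * (of_nat (length q) * ennreal (geom_sum a c (length q - 1)))
        = ennreal (cmod (Sigma_op g q) * real (length q) * geom_sum A C0 (length q - 1))"
      using a A C0
      by (simp add: geom ennreal_mult geom_sum_nonneg ennreal_of_nat_eq_real_of_nat mult.assoc)
    also have "\<dots> \<le> ennreal (cmod (g q) * (2 / A ^ 2 * A ^ length q))"
      by (rule ennreal_leI[OF Sigma_monomial_weight[OF C0 A \<open>q \<noteq> []\<close>]])
    finally show ?thesis .
  qed
  have "mnorm n a c (JD n (Sigma_op g)) \<le> (\<Sum>q\<in>supp (Sigma_op g).
      ennreal (cmod (Sigma_op g q)) * (of_nat (length q) * ennreal (geom_sum a c (length q - 1))))"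
    by (rule mnorm_JD[OF finite_subset[OF sub fin] a])
  also have "\<dots> \<le> (\<Sum>q\<in>supp (Sigma_op g). ennreal (cmod (g q) * (2 / A ^ 2 * A ^ length q)))"
    by (rule sum_mono[OF monomial])
  also have "\<dots> \<le> (\<Sum>q\<in>supp g. ennreal (cmod (g q) * (2 / A ^ 2 * A ^ length q)))"
    by (rule sum_mono2[OF fin sub]) simp
  also have "\<dots> = ennreal (\<Sum>q\<in>supp g. cmod (g q) * (2 / A ^ 2 * A ^ length q))"
    using A by (intro sum_ennreal) simp
  also have "(\<Sum>q\<in>supp g. cmod (g q) * (2 / A ^ 2 * A ^ length q)) = 2 / A ^ 2 * normA A g"
    unfolding normA_def sum_distrib_left by (rule sum.cong[OF refl]) (simp add: mult_ac)
  finally show ?thesis .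
qed

lemma normA_nonneg: "A \<ge> 0 \<Longrightarrow> normA A P \<ge> 0"
  unfolding normA_def by (intro sum_nonneg) auto

lemma is_ncpoly_degree: "is_ncpoly n g \<Longrightarrow> \<exists>D. \<forall>q. g q \<noteq> 0 \<longrightarrow> length q \<le> D"
  unfolding is_ncpoly_def supp_def
  by (metis (mono_tags, lifting) Max_ge finite_imageI imageI mem_Collect_eq)

lemma mbounded_support_diff:
  "mbounded_support n D M \<Longrightarrow> mbounded_support n D N \<Longrightarrow> mbounded_support n D (mdiff M N)"
  unfolding mbounded_support_def mdiff_def by (auto intro: bounded_support_diff)

lemma mnorm_uminus: "mnorm n a c (\<lambda>i k x. - M i k x) = mnorm n a c M"
  unfolding mnorm_def by (simp add: tnorm_uminus)

lemma mdiff_JD_Sigma: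
  "mdiff (JD n (Sigma_op g)) (JD n (Sigma_op f)) = (\<lambda>i k x. - JD n (Sigma_op (\<lambda>w. f w - g w)) i k x)"
  by (simp add: fun_eq_iff mdiff_def JD_apply Sigma_op_def diff_divide_distrib sum_subtractf)

lemma Qm_replicate:
  "Qm n tau (replicate m h) = one_tau_tau_one tau (mtrace n (mpow n m (JD n h)))"
  unfolding Qm_def mtrace_def mpow_def map_replicate ..

lemma Qm_no_variables: "Qm 0 tau gs = (\<lambda>w. 0)"
  by (simp add: Qm_def one_tau_tau_one_def fun_eq_iff)

lemma normA_one_tau_tau_one_mtrace:
  assumes M: "mbounded_support n D M" and A: "A \<ge> 0" and C0: "C0 \<ge> 0"
    and tau_bd: "\<And>q. set q \<subseteq> {..<n} \<Longrightarrow> cmod (tau q) \<le> C0 ^ length q"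
    and \<beta>: "\<beta> \<ge> 0" and bound: "\<And>a c. (a, c) \<in> {(A, C0), (C0, A)} \<Longrightarrow> mnorm n a c M \<le> ennreal \<beta>"
  shows "normA A (one_tau_tau_one tau (mtrace n M)) \<le> 2 * \<beta>"
proof -
  have trace: "tnorm a c (mtrace n M) \<le> ennreal \<beta>" if ac: "(a, c) \<in> {(A, C0), (C0, A)}" for a c
  proof -
    have "a \<ge> 0" "c \<ge> 0" using ac A C0 by auto
    then have "tnorm a c (mtrace n M) \<le> mnorm n a c M" by (rule tnorm_mtrace)
    also have "\<dots> \<le> ennreal \<beta>" by (rule bound[OF ac])
    finally show ?thesis .
  qed
  have "ennreal (normA A (one_tau_tau_one tau (mtrace n M)))
      \<le> tnorm A C0 (mtrace n M) + tnorm C0 A (mtrace n M)"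
    by (rule normA_one_tau_tau_one[OF bounded_support_mtrace[OF M] A C0 tau_bd])
  also have "\<dots> \<le> ennreal \<beta> + ennreal \<beta>"
    by (intro add_mono trace) simp_all
  also have "\<dots> = ennreal (2 * \<beta>)"
    by (metis \<beta> ennreal_plus mult_2)
  finally show ?thesis by (subst (asm) ennreal_le_iff) (use \<beta> in simp_all)
qed

lemma mnorm_mpow_JD_Sigma:
  assumes g: "finite (supp g)" and A: "A > 0" and C0: "0 \<le> C0" "2 * C0 \<le> A"
    and ac: "(a, c) \<in> {(A, C0), (C0, A)}" and m: "m \<ge> 1"
  shows "mnorm n a c (mpow n m (JD n (Sigma_op g))) \<le> ennreal ((2 / A ^ 2) ^ m * normA A g ^ m)"
proof -
  obtain k where k: "m = Suc k" using m by (cases m) auto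
  have "a \<ge> 0" "c \<ge> 0" using ac A C0 by auto
  then have "mnorm n a c (mpow n m (JD n (Sigma_op g))) \<le> ennreal (2 / A ^ 2 * normA A g) ^ m"
    unfolding k by (rule mnorm_mpow[OF _ _ mnorm_JD_Sigma[OF g A C0 ac]])
  also have "\<dots> = ennreal ((2 / A ^ 2 * normA A g) ^ m)"
    using A normA_nonneg[of A g] by (intro ennreal_power) simp
  also have "(2 / A ^ 2 * normA A g) ^ m = (2 / A ^ 2) ^ m * normA A g ^ m"
    by (rule power_mult_distrib)
  finally show ?thesis .
qed

lemma ennreal_telescope_sum:
  assumes "r \<ge> 0" "x \<ge> 0" "y \<ge> 0" "z \<ge> 0"
  shows "(\<Sum>l<m. ennreal (r * x) ^ l * ennreal (r * y) ^ (m - l - 1) * ennreal (r * z))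
       = ennreal (r ^ m * (\<Sum>l<m. x ^ l * y ^ (m - l - 1) * z))"
proof -
  have "ennreal (r * x) ^ l * ennreal (r * y) ^ (m - l - 1) * ennreal (r * z)
      = ennreal (r ^ m * (x ^ l * y ^ (m - l - 1) * z))" if "l < m" for l
  proof -
    have "r ^ m = r ^ (l + (m - l - 1) + 1)" using that by simp
    also have "\<dots> = r ^ l * r ^ (m - l - 1) * r" by (simp only: power_add power_one_right)
    finally have "r ^ m = r ^ l * r ^ (m - l - 1) * r" .
    then show ?thesis
      using assms by (simp add: ennreal_power ennreal_mult[symmetric] power_mult_distrib mult_ac)
  qed
  then have "(\<Sum>l<m. ennreal (r * x) ^ l * ennreal (r * y) ^ (m - l - 1) * ennreal (r * z))
      = (\<Sum>l<m. ennreal (r ^ m * (x ^ l * y ^ (m - l - 1) * z)))"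
    by (intro sum.cong refl) simp
  also have "\<dots> = ennreal (\<Sum>l<m. r ^ m * (x ^ l * y ^ (m - l - 1) * z))"
    using assms by (intro sum_ennreal) auto
  finally show ?thesis by (simp add: sum_distrib_left)
qed

lemma mnorm_mpow_JD_Sigma_diff:
  assumes f: "finite (supp f)" and g: "finite (supp g)" and A: "A > 0" and C0: "0 \<le> C0" "2 * C0 \<le> A"
    and ac: "(a, c) \<in> {(A, C0), (C0, A)}" and m: "m \<ge> 1"
  shows "mnorm n a c (mdiff (mpow n m (JD n (Sigma_op g))) (mpow n m (JD n (Sigma_op f))))
    \<le> ennreal ((2 / A ^ 2) ^ m *
         (\<Sum>k<m. normA A g ^ k * normA A f ^ (m - k - 1) * normA A (\<lambda>w. f w - g w)))"
proof -
  obtain k where k: "m = Suc k" using m by (cases m) auto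
  have a: "a \<ge> 0" "c \<ge> 0" using ac A C0 by auto
  have "finite (supp (\<lambda>w. f w - g w))"
    by (rule finite_subset[OF _ finite_UnI[OF f g]]) (auto simp: supp_def)
  then have "mnorm n a c (mdiff (JD n (Sigma_op g)) (JD n (Sigma_op f)))
      \<le> ennreal (2 / A ^ 2 * normA A (\<lambda>w. f w - g w))"
    unfolding mdiff_JD_Sigma mnorm_uminus by (rule mnorm_JD_Sigma[OF _ A C0 ac])
  then have "mnorm n a c (mdiff (mpow n m (JD n (Sigma_op g))) (mpow n m (JD n (Sigma_op f))))
    \<le> (\<Sum>l<m. ennreal (2 / A ^ 2 * normA A g) ^ l * ennreal (2 / A ^ 2 * normA A f) ^ (m - l - 1)
          * ennreal (2 / A ^ 2 * normA A (\<lambda>w. f w - g w)))"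
    unfolding k by (rule mnorm_mpow_diff[OF a mnorm_JD_Sigma[OF g A C0 ac] mnorm_JD_Sigma[OF f A C0 ac]])
  also have "\<dots> = ennreal ((2 / A ^ 2) ^ m *
         (\<Sum>k<m. normA A g ^ k * normA A f ^ (m - k - 1) * normA A (\<lambda>w. f w - g w)))"
    using A by (intro ennreal_telescope_sum normA_nonneg) auto
  finally show ?thesis .
qed

lemma normA_Qm_Sigma:
  assumes tau_bd: "\<And>q. set q \<subseteq> {..<n} \<Longrightarrow> cmod (tau q) \<le> C0 ^ length q"
    and A: "A > 0" and C0: "0 \<le> C0" "2 * C0 \<le> A" and m: "m \<ge> 1" and g: "is_ncpoly n g"
  shows "normA A (Qm n tau (replicate m (Sigma_op g))) \<le> 2 * (2 / A ^ 2) ^ m * normA A g ^ m"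
proof -
  obtain D where "\<forall>q. g q \<noteq> 0 \<longrightarrow> length q \<le> D" using is_ncpoly_degree[OF g] by blast
  then have "mbounded_support n D (JD n (Sigma_op g))" using g by (intro mbounded_support_JD) auto
  then have supp: "mbounded_support n (m * D) (mpow n m (JD n (Sigma_op g)))"
    by (rule mbounded_support_mpow)
  have fin: "finite (supp g)" using g by (simp add: is_ncpoly_def)
  have nonneg: "0 \<le> (2 / A ^ 2) ^ m * normA A g ^ m" using A by (simp add: normA_nonneg)
  have "normA A (one_tau_tau_one tau (mtrace n (mpow n m (JD n (Sigma_op g)))))
      \<le> 2 * ((2 / A ^ 2) ^ m * normA A g ^ m)"
    by (rule normA_one_tau_tau_one_mtrace[OF supp _ C0(1) tau_bd nonneg
          mnorm_mpow_JD_Sigma[OF fin A C0 _ m]])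
       (use A in simp_all)
  then show ?thesis by (simp add: Qm_replicate mult.assoc)
qed

lemma normA_Qm_Sigma_diff:
  assumes tau_bd: "\<And>q. set q \<subseteq> {..<n} \<Longrightarrow> cmod (tau q) \<le> C0 ^ length q"
    and A: "A > 0" and C0: "0 \<le> C0" "2 * C0 \<le> A" and m: "m \<ge> 1"
    and f: "is_ncpoly n f" and g: "is_ncpoly n g"
  shows "normA A (\<lambda>w. Qm n tau (replicate m (Sigma_op g)) w - Qm n tau (replicate m (Sigma_op f)) w)
    \<le> 2 * (2 / A ^ 2) ^ m *
         (\<Sum>k<m. normA A g ^ k * normA A f ^ (m - k - 1) * normA A (\<lambda>w. f w - g w))"
proof -
  let ?G = "mpow n m (JD n (Sigma_op g))" and ?F = "mpow n m (JD n (Sigma_op f))"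
  let ?S = "\<Sum>k<m. normA A g ^ k * normA A f ^ (m - k - 1) * normA A (\<lambda>w. f w - g w)"
  obtain Df Dg where "\<forall>q. f q \<noteq> 0 \<longrightarrow> length q \<le> Df" "\<forall>q. g q \<noteq> 0 \<longrightarrow> length q \<le> Dg"
    using is_ncpoly_degree[OF f] is_ncpoly_degree[OF g] by blast
  then have "mbounded_support n (Df + Dg) (JD n (Sigma_op f))"
    "mbounded_support n (Df + Dg) (JD n (Sigma_op g))"
    using f g by (auto intro!: mbounded_support_JD simp: trans_le_add1 trans_le_add2)
  then have supp: "mbounded_support n (m * (Df + Dg)) ?F" "mbounded_support n (m * (Df + Dg)) ?G"
    by (auto intro: mbounded_support_mpow)
  have Qm_diff: "(\<lambda>w. Qm n tau (replicate m (Sigma_op g)) w - Qm n tau (replicate m (Sigma_op f)) w)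
      = one_tau_tau_one tau (mtrace n (mdiff ?G ?F))"
    unfolding Qm_replicate
    by (rule ext, rule one_tau_tau_one_diff[OF bounded_support_mtrace[OF supp(2)]
          bounded_support_mtrace[OF supp(1)], THEN trans]) (simp add: mtrace_def mdiff_def sum_subtractf)
  have fin: "finite (supp f)" "finite (supp g)" using f g by (simp_all add: is_ncpoly_def)
  have nonneg: "0 \<le> (2 / A ^ 2) ^ m * ?S" using A by (simp add: normA_nonneg sum_nonneg)
  have "normA A (one_tau_tau_one tau (mtrace n (mdiff ?G ?F))) \<le> 2 * ((2 / A ^ 2) ^ m * ?S)"
    by (rule normA_one_tau_tau_one_mtrace[OF mbounded_support_diff[OF supp(2,1)] _ C0(1) tau_bd nonneg
          mnorm_mpow_JD_Sigma_diff[OF fin A C0 _ m]]) (use A in simp_all)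
  then show ?thesis by (simp add: Qm_diff mult.assoc)
qed

theorem mainTheorem9:
  fixes n m :: nat and tau :: "nat list \<Rightarrow> complex" and C0 A :: real and f g :: ncpoly
  assumes tau_bd: "\<And>q. set q \<subseteq> {..<n} \<Longrightarrow> cmod (tau q) \<le> C0 ^ length q"
    and A: "A > 1" and CA: "C0 / A < 1 / 2"
    and m: "m \<ge> 1"
    and f: "is_ncpoly0 n f" and g: "is_ncpoly0 n g"
  shows "normA A (\<lambda>w. Qm n tau (replicate m (Sigma_op g)) w - Qm n tau (replicate m (Sigma_op f)) w)
           \<le> 2 * (2 / A ^ 2) ^ m *
             (\<Sum>k<m. normA A g ^ k * normA A f ^ (m - k - 1) * normA A (\<lambda>w. f w - g w))
       \<and> normA A (Qm n tau (replicate m (Sigma_op g))) \<le> 2 * (2 / A ^ 2) ^ m * normA A g ^ m"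
proof (cases "n = 0")
  case True
  then show ?thesis
    using A by (simp add: Qm_no_variables normA_def supp_def normA_nonneg sum_nonneg)
next
  case False
  have A0: "A > 0" using A by simp
  \<comment> \<open>C0 \<ge> 0 because |\<tau>(X_0)| \<le> C0\<close>
  have C0: "0 \<le> C0" "2 * C0 \<le> A"
    using tau_bd[of "[0]"] False CA A0 by (auto simp: field_simps intro: order_trans[OF norm_ge_zero])
  have "is_ncpoly n f" "is_ncpoly n g" using f g by (simp_all add: is_ncpoly0_def)
  then show ?thesis
    using normA_Qm_Sigma_diff[OF tau_bd A0 C0 m] normA_Qm_Sigma[OF tau_bd A0 C0 m] by blast
qed

end
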